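(* Let $\mathbf P=UV^\top$ be the transition matrix of a Markov chain on $\{1,\dots,p\}$ with stationary distribution $\pi$ having all entries positive, where $U,V\in\mathbb R^{p\times r}$ are entrywise nonnegative with $U\mathbf 1_r=\mathbf 1_p$, $V^\top\mathbf 1_p=\mathbf 1_r$, each meta-state has an anchor state, and $\mathrm{rank}(U)=r$. Let $\mathbf H=[\mathbf h_1,\dots,\mathbf h_r]$ contain the right singular vectors of $\mathbf Q=\mathrm{diag}(\pi)\mathbf P[\mathrm{diag}(\pi)]^{-1/2}$ associated with its nonzero singular values. Then there exists a simplicial cone in $\mathbb R^r$ with $r$ extreme rays such that all rows of $\mathbf H$ are contained in this simplicial cone. Furthermore, for all anchor states $j$ of a meta-state, the $j$-th row of $\mathbf H$ lies exactly on one extreme ray of this simplicial cone.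
   Context: A state $j$ is an anchor state of meta-state $k$ if $V_{jk}>0$ and $V_{js}=0$ for all $s\neq k$. A simplicial cone in $\mathbb R^r$ with $r$ extreme rays is a set $\{\sum_{k=1}^ra_k\boldsymbol\ell_k: a_k\ge0\}$ for linearly independent $\boldsymbol\ell_1,\dots,\boldsymbol\ell_r\in\mathbb R^r$, its extreme rays being $\{a\boldsymbol\ell_k:a\ge0\}$. *)

theory Defs
  imports "HOL-Analysis.Analysis"
begin

text \<open>Matrices are rendered as real^'n^'m (m rows, n columns), entry (i,j) is A$i$j.\<close>

definition diag_mat :: "real^'n \<Rightarrow> real^'n^'n" where
  "diag_mat v = (\<chi> i j. if i = j then v $ i else 0)"

definition stochastic_matrix :: "real^'n^'n \<Rightarrow> bool" where
  "stochastic_matrix P \<longleftrightarrow> (\<forall>i j. P $ i $ j \<ge> 0) \<and> (\<forall>i. (\<Sum>j\<in>UNIV. P $ i $ j) = 1)"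

definition stationary_distribution :: "real^'n^'n \<Rightarrow> real^'n \<Rightarrow> bool" where
  "stationary_distribution P \<pi> \<longleftrightarrow> (\<forall>i. \<pi> $ i \<ge> 0) \<and> (\<Sum>i\<in>UNIV. \<pi> $ i) = 1 \<and> \<pi> v* P = \<pi>"

definition anchor_state :: "real^'r^'p \<Rightarrow> 'p \<Rightarrow> 'r \<Rightarrow> bool" where
  "anchor_state V j k \<longleftrightarrow> V $ j $ k > 0 \<and> (\<forall>s. s \<noteq> k \<longrightarrow> V $ j $ s = 0)"

definition right_singular_vector :: "real^'n^'m \<Rightarrow> real \<Rightarrow> real^'n \<Rightarrow> bool" where
  "right_singular_vector Q \<sigma> h \<longleftrightarrow> \<sigma> > 0 \<and> norm h = 1 \<and>
     (\<exists>u. norm u = 1 \<and> Q *v h = \<sigma> *\<^sub>R u \<and> transpose Q *v u = \<sigma> *\<^sub>R h)"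

definition simplicial_cone :: "('r \<Rightarrow> real^'r) \<Rightarrow> (real^'r) set" where
  "simplicial_cone l = {(\<Sum>k\<in>UNIV. a k *\<^sub>R l k) | a. \<forall>k. a k \<ge> 0}"

definition extreme_ray :: "('r \<Rightarrow> real^'r) \<Rightarrow> 'r \<Rightarrow> (real^'r) set" where
  "extreme_ray l k = {a *\<^sub>R l k | a. a \<ge> 0}"

end

theory Submission
  imports Defs
begin

text \<open>Transposing \<open>Q = diag(\<pi>) U V\<^sup>T diag(\<pi>)^(-1/2)\<close> shows that
  every right singular vector for a nonzero singular value lies in the column space of
  \<open>D = diag(\<pi>)^(-1/2) V\<close>, so \<open>H = D W\<close> for some \<open>r \<times> r\<close> matrix \<open>W\<close>.
  Since \<open>H\<^sup>T H = I\<close>, the matrix \<open>W\<close> is invertible and its rows \<open>\<ell>\<^sub>k\<close> are linearly independent.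
  Row \<open>j\<close> of \<open>H\<close> is \<open>\<Sum>\<^sub>k D\<^sub>j\<^sub>k \<ell>\<^sub>k\<close> with \<open>D \<ge> 0\<close>, so it lies in the cone spanned by
  the \<open>\<ell>\<^sub>k\<close>; for an anchor state \<open>j\<close> of \<open>k\<close> only \<open>D\<^sub>j\<^sub>k > 0\<close> survives.\<close>

lemma transpose_diag_mat: "transpose (diag_mat v) = diag_mat v"
  by (simp add: vec_eq_iff diag_mat_def transpose_def)

lemma diag_mat_mult_nth: "(diag_mat v ** A) $ i $ j = v $ i * A $ i $ j"
  by (simp add: matrix_matrix_mult_def diag_mat_def if_distrib[of "\<lambda>x. x * _"] cong: if_cong)

lemma right_singular_vector_in_range_transpose:
  assumes "right_singular_vector Q \<sigma> h"
  shows "\<exists>x. h = transpose Q *v x"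
proof -
  obtain u where "\<sigma> > 0" "transpose Q *v u = \<sigma> *\<^sub>R h"
    using assms unfolding right_singular_vector_def by blast
  then have "h = transpose Q *v ((1 / \<sigma>) *\<^sub>R u)"
    by (simp add: matrix_vector_mult_scaleR)
  then show ?thesis by blast
qed

lemma matrix_factor_through_columns:
  fixes H :: "'a::comm_semiring_1^'n^'m" and M :: "'a^'k^'m"
  assumes "\<And>j. \<exists>x. column j H = M *v x"
  shows "\<exists>W. H = M ** W"
proof -
  obtain w where w: "\<And>j. column j H = M *v w j"
    using assms by metis
  have "H $ i $ j = (M *v w j) $ i" for i j
    using w[of j] by (simp add: column_def vec_eq_iff)
  then have "H = M ** (\<chi> i j. w j $ i)"
    by (simp add: vec_eq_iff matrix_matrix_mult_def matrix_vector_mult_def)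
  then show ?thesis by blast
qed

lemma transpose_mult_self_eq_mat_1:
  fixes H :: "real^'n^'m"
  assumes "\<forall>k l. column k H \<bullet> column l H = (if k = l then 1 else 0)"
  shows "transpose H ** H = mat 1"
proof -
  have "(transpose H ** H) $ k $ l = column k H \<bullet> column l H" for k l
    by (simp add: matrix_matrix_mult_def transpose_def inner_vec_def column_def)
  then show ?thesis using assms by (simp add: vec_eq_iff mat_def)
qed

lemma inj_independent_if_scalars_zero:
  fixes l :: "'i::finite \<Rightarrow> 'a::real_vector"
  assumes scalars_zero: "\<And>c. (\<Sum>i\<in>UNIV. c i *\<^sub>R l i) = 0 \<Longrightarrow> \<forall>i. c i = 0"
  shows "inj l" and "independent (range l)"
proof -
  show inj: "inj l"
  proof (rule injI, rule ccontr)
    fix i i' assume "l i = l i'" "i \<noteq> i'"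
    let ?c = "\<lambda>m. (if m = i then 1 else 0) - (if m = i' then 1 else 0) :: real"
    have "(\<Sum>m\<in>UNIV. ?c m *\<^sub>R l m) = l i - l i'"
      by (simp add: scaleR_left_diff_distrib sum_subtractf if_distrib[of "\<lambda>x. x *\<^sub>R _"] cong: if_cong)
    also have "\<dots> = 0" using \<open>l i = l i'\<close> by simp
    finally have "?c i = 0" by (rule scalars_zero[THEN spec])
    then show False using \<open>i \<noteq> i'\<close> by simp
  qed
  show "independent (range l)"
  proof (rule independent_if_scalars_zero)
    fix f x assume sum0: "(\<Sum>x\<in>range l. f x *\<^sub>R x) = 0" and "x \<in> range l"
    have "(\<Sum>i\<in>UNIV. f (l i) *\<^sub>R l i) = 0"
      using sum0 inj by (simp add: sum.reindex)
    then have "\<forall>i. f (l i) = 0" by (rule scalars_zero)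
    then show "f x = 0" using \<open>x \<in> range l\<close> by blast
  qed simp
qed

lemma rows_inj_independent_if_right_invertible:
  fixes W :: "real^'n^'m"
  assumes "W ** B = mat 1"
  shows "inj (\<lambda>i. row i W)" and "independent (range (\<lambda>i. row i W))"
  using assms matrix_right_invertible_independent_rows[of W]
  by (auto simp: scalar_mult_eq_scaleR intro!: inj_independent_if_scalars_zero)

lemma row_matrix_mult: "row j (A ** W) = (\<Sum>i\<in>UNIV. A $ j $ i *\<^sub>R row i W)"
  by (simp add: vec_eq_iff sum_component row_def matrix_matrix_mult_def)

lemma row_matrix_mult_single_support:
  assumes "\<And>i. i \<noteq> k \<Longrightarrow> A $ j $ i = 0"
  shows "row j (A ** W) = A $ j $ k *\<^sub>R row k W"
  unfolding row_matrix_mult using assms by (subst sum.remove[of _ k]) auto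

lemma row_matrix_mult_in_simplicial_cone:
  fixes A :: "real^'r^'p"
  assumes "\<forall>i. A $ j $ i \<ge> 0"
  shows "row j (A ** W) \<in> simplicial_cone (\<lambda>i. row i W)"
  unfolding simplicial_cone_def row_matrix_mult using assms by blast

lemma unique_extreme_ray_of_positive_multiple:
  fixes l :: "'r::finite \<Rightarrow> real^'r"
  assumes "inj l" "independent (range l)" "c > 0"
  shows "\<exists>!k'. c *\<^sub>R l k \<in> extreme_ray l k'"
proof (rule ex1I[of _ k])
  show "c *\<^sub>R l k \<in> extreme_ray l k"
    unfolding extreme_ray_def using \<open>c > 0\<close> by force
next
  fix k' assume "c *\<^sub>R l k \<in> extreme_ray l k'"
  then obtain b where b: "c *\<^sub>R l k = b *\<^sub>R l k'"
    unfolding extreme_ray_def by blast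
  show "k' = k"
  proof (rule ccontr)
    assume "k' \<noteq> k"
    then have "l k' \<in> range l - {l k}"
      using \<open>inj l\<close> by (auto dest: injD)
    moreover have "l k = (b / c) *\<^sub>R l k'"
      using arg_cong[OF b, of "scaleR (1 / c)"] \<open>c > 0\<close> by simp
    ultimately have "l k \<in> span (range l - {l k})"
      by (simp add: span_base span_scale)
    then show False
      using \<open>independent (range l)\<close> unfolding dependent_def by blast
  qed
qed

theorem mainTheorem13:
  fixes U V :: "real^'r::finite^'p::finite"
    and P Q :: "real^'p^'p"
    and \<pi> :: "real^'p"
    and H :: "real^'r^'p"
  assumes P_def: "P = U ** transpose V"
    and markov: "stochastic_matrix P"
    and stat: "stationary_distribution P \<pi>"
    and pi_pos: "\<forall>i. \<pi> $ i > 0"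
    and U_nonneg: "\<forall>i k. U $ i $ k \<ge> 0"
    and V_nonneg: "\<forall>j k. V $ j $ k \<ge> 0"
    and U_rows: "U *v (\<chi> k. 1) = (\<chi> i. 1)"
    and V_cols: "transpose V *v (\<chi> j. 1) = (\<chi> k. 1)"
    and anchors: "\<forall>k. \<exists>j. anchor_state V j k"
    and rankU: "rank U = CARD('r)"
    and Q_def: "Q = diag_mat \<pi> ** P ** diag_mat (\<chi> i. 1 / sqrt (\<pi> $ i))"
    and H_orth: "\<forall>k l. (column k H) \<bullet> (column l H) = (if k = l then 1 else 0)"
    and H_sing: "\<forall>k. \<exists>\<sigma>. right_singular_vector Q \<sigma> (column k H)"
  shows "\<exists>l :: 'r \<Rightarrow> real^'r. inj l \<and> independent (range l) \<and>
           (\<forall>j. row j H \<in> simplicial_cone l) \<and>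
           (\<forall>j k. anchor_state V j k \<longrightarrow> (\<exists>!k'. row j H \<in> extreme_ray l k'))"
proof -
  \<comment> \<open>Only positivity of \<open>\<pi>\<close> and \<open>V \<ge> 0\<close> enter.\<close>
  define D where "D = diag_mat (\<chi> i. 1 / sqrt (\<pi> $ i)) ** V"
  have D_nth: "D $ j $ i = V $ j $ i / sqrt (\<pi> $ j)" for j i
    by (simp add: D_def diag_mat_mult_nth)
  have "transpose Q = D ** (transpose U ** diag_mat \<pi>)"
    by (simp add: Q_def P_def D_def matrix_transpose_mul transpose_diag_mat matrix_mul_assoc)
  then have "\<exists>x. column k H = D *v x" for k
    using H_sing right_singular_vector_in_range_transpose
    by (metis matrix_vector_mul_assoc)
  then obtain W where H_eq: "H = D ** W"
    using matrix_factor_through_columns by blast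
  have "(transpose H ** D) ** W = mat 1"
    using transpose_mult_self_eq_mat_1[OF H_orth] by (simp add: H_eq matrix_mul_assoc)
  then have "W ** (transpose H ** D) = mat 1"
    by (rule matrix_left_right_inverse[THEN iffD1])
  note rows_W = rows_inj_independent_if_right_invertible[OF this]
  have cone: "row j H \<in> simplicial_cone (\<lambda>i. row i W)" for j
    unfolding H_eq using V_nonneg pi_pos
    by (intro row_matrix_mult_in_simplicial_cone) (simp add: D_nth less_imp_le)
  have "\<exists>!k'. row j H \<in> extreme_ray (\<lambda>i. row i W) k'" if "anchor_state V j k" for j k
  proof -
    have "row j H = D $ j $ k *\<^sub>R row k W"
      unfolding H_eq using that by (intro row_matrix_mult_single_support) (simp add: D_nth anchor_state_def)
    moreover have "D $ j $ k > 0"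
      using that pi_pos by (simp add: D_nth anchor_state_def)
    ultimately show ?thesis
      using rows_W unique_extreme_ray_of_positive_multiple[of "\<lambda>i. row i W"] by simp
  qed
  then show ?thesis
    using rows_W cone by blast
qed

end
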